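(* Let $(X,d)$ be a totally bounded metric space with II-modulus of total boundedness $\gamma$, $\emptyset\ne F\subseteq X$ with representation $(\tilde F_k)$, $G,H:\mathbb{R}_+\to\mathbb{R}_+$ with $G$-modulus $\alpha_G$ and $H$-modulus $\beta_H$, and $(\varepsilon_n)$ a sequence in $\mathbb{R}_+$ with $\sum\varepsilon_i<\infty$ and Cauchy modulus $\xi$. Assume (1) $(x_n)$ is uniformly quasi-$(G,H)$-Fej\'er monotone w.r.t. $F$ (and $(\varepsilon_n)$) with modulus $\chi$, and (2) $(x_n)$ has the liminf property w.r.t. $F$ with liminf-bound $\widehat\Phi$. Then $(x_n)$ is Cauchy and for all $k\in\mathbb{N}$ and $g:\mathbb{N}\to\mathbb{N}$ there exists $N\le\widehat\Psi_0(P)$ such that $d(x_i,x_j)\le\frac1{k+1}$ for all $i,j\in[N,N+g(N)]$, where $P:=\gamma(\alpha_G(4\beta_H(2k+1)+3))+1$, $\chi_g(n,r):=\chi(n,g(n),r)$, $\chi^M_g(n,r):=\max\{\chi_g(i,r)\mid i\le n\}$, and $$\widehat\Psi_0(0):=0,\quad \widehat\Psi_0(n+1):=\widehat\Phi\Big(\chi^M_g\big(\widehat\Psi_0(n),4\beta_H(2k+1)+3\big),\ \xi(4\beta_H(2k+1)+3)\Big).$$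
   Context: II-modulus $\gamma$: for every $k$ and every sequence $(y_n)$ in $X$ there are $0\le i<j\le\gamma(k)$ with $d(y_i,y_j)\le\frac1{k+1}$. Representation: $F=\bigcap_k\tilde F_k$, $AF_k:=\bigcap_{l\le k}\tilde F_l$. $G$-modulus: $a\le\frac1{\alpha_G(k)+1}\Rightarrow G(a)\le\frac1{k+1}$; $H$-modulus: $H(a)\le\frac1{\beta_H(k)+1}\Rightarrow a\le\frac1{k+1}$. Cauchy modulus $\xi$: $\sum_{i=\xi(n)}^\infty\varepsilon_i<\frac1{n+1}$ for all $n$. Uniformly quasi-$(G,H)$-Fej\'er monotone with modulus $\chi:\mathbb{N}^3\to\mathbb{N}$: for all $n,m,r\in\mathbb{N}$, all $p\in AF_{\chi(n,m,r)}$ and all $l\le m$, $H(d(x_{n+l},p))<G(d(x_n,p))+\sum_{i=n}^{n+m-1}\varepsilon_i+\frac1{r+1}$. Liminf property w.r.t. $F$: for all $k,n$ there is $N\ge n$ with $x_N\in AF_k$; then $\widehat\varphi_F(k,n):=\min\{m\ge n\mid x_m\in AF_k\}$, and a liminf-bound is any $\widehat\Phi:\mathbb{N}^2\to\mathbb{N}$, monotone in both arguments, with $\widehat\Phi\ge\widehat\varphi_F$ pointwise. *)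

theory Defs
  imports "HOL-Analysis.Analysis"
begin

definition II_modulus :: "(nat \<Rightarrow> nat) \<Rightarrow> ('a::metric_space) itself \<Rightarrow> bool" where
  "II_modulus \<gamma> _ \<longleftrightarrow> (\<forall>k (y::nat \<Rightarrow> 'a). \<exists>i j. i < j \<and> j \<le> \<gamma> k \<and> dist (y i) (y j) \<le> 1 / (real k + 1))"

definition AF :: "(nat \<Rightarrow> 'a set) \<Rightarrow> nat \<Rightarrow> 'a set" where
  "AF Ft k = (\<Inter>l\<in>{..k}. Ft l)"

definition G_modulus :: "(real \<Rightarrow> real) \<Rightarrow> (nat \<Rightarrow> nat) \<Rightarrow> bool" where
  "G_modulus G \<alpha> \<longleftrightarrow> (\<forall>k a. 0 \<le> a \<longrightarrow> a \<le> 1 / (real (\<alpha> k) + 1) \<longrightarrow> G a \<le> 1 / (real k + 1))"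

definition H_modulus :: "(real \<Rightarrow> real) \<Rightarrow> (nat \<Rightarrow> nat) \<Rightarrow> bool" where
  "H_modulus H \<beta> \<longleftrightarrow> (\<forall>k a. 0 \<le> a \<longrightarrow> H a \<le> 1 / (real (\<beta> k) + 1) \<longrightarrow> a \<le> 1 / (real k + 1))"

definition cauchy_modulus_series :: "(nat \<Rightarrow> real) \<Rightarrow> (nat \<Rightarrow> nat) \<Rightarrow> bool" where
  "cauchy_modulus_series \<epsilon> \<xi> \<longleftrightarrow> (\<forall>n. (\<Sum>i. \<epsilon> (i + \<xi> n)) < 1 / (real n + 1))"

definition unif_quasi_GH_fejer ::
  "(nat \<Rightarrow> 'a::metric_space) \<Rightarrow> (nat \<Rightarrow> 'a set) \<Rightarrow> (real \<Rightarrow> real) \<Rightarrow> (real \<Rightarrow> real)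
   \<Rightarrow> (nat \<Rightarrow> real) \<Rightarrow> (nat \<Rightarrow> nat \<Rightarrow> nat \<Rightarrow> nat) \<Rightarrow> bool" where
  "unif_quasi_GH_fejer x Ft G H \<epsilon> chi \<longleftrightarrow>
     (\<forall>n m r p l. p \<in> AF Ft (chi n m r) \<longrightarrow> l \<le> m \<longrightarrow>
        H (dist (x (n + l)) p) < G (dist (x n) p) + (\<Sum>i\<in>{n..<n+m}. \<epsilon> i) + 1 / (real r + 1))"

definition liminf_property :: "(nat \<Rightarrow> 'a) \<Rightarrow> (nat \<Rightarrow> 'a set) \<Rightarrow> bool" where
  "liminf_property x Ft \<longleftrightarrow> (\<forall>k n. \<exists>N\<ge>n. x N \<in> AF Ft k)"

definition varphi_hat :: "(nat \<Rightarrow> 'a) \<Rightarrow> (nat \<Rightarrow> 'a set) \<Rightarrow> nat \<Rightarrow> nat \<Rightarrow> nat" where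
  "varphi_hat x Ft k n = (LEAST m. n \<le> m \<and> x m \<in> AF Ft k)"

definition liminf_bound :: "(nat \<Rightarrow> 'a) \<Rightarrow> (nat \<Rightarrow> 'a set) \<Rightarrow> (nat \<Rightarrow> nat \<Rightarrow> nat) \<Rightarrow> bool" where
  "liminf_bound x Ft \<Phi> \<longleftrightarrow>
     (\<forall>k k' n n'. k \<le> k' \<longrightarrow> n \<le> n' \<longrightarrow> \<Phi> k n \<le> \<Phi> k' n') \<and>
     (\<forall>k n. varphi_hat x Ft k n \<le> \<Phi> k n)"

definition chiM :: "(nat \<Rightarrow> nat \<Rightarrow> nat \<Rightarrow> nat) \<Rightarrow> (nat \<Rightarrow> nat) \<Rightarrow> nat \<Rightarrow> nat \<Rightarrow> nat" where
  "chiM chi g n r = Max ((\<lambda>i. chi i (g i) r) ` {..n})"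

text \<open>Psi0 with the parameter K standing for 4 * beta_H(2k+1) + 3.\<close>
primrec Psi0 :: "(nat \<Rightarrow> nat \<Rightarrow> nat) \<Rightarrow> (nat \<Rightarrow> nat \<Rightarrow> nat \<Rightarrow> nat) \<Rightarrow> (nat \<Rightarrow> nat)
    \<Rightarrow> (nat \<Rightarrow> nat) \<Rightarrow> nat \<Rightarrow> nat \<Rightarrow> nat" where
  "Psi0 \<Phi> chi g \<xi> K 0 = 0"
| "Psi0 \<Phi> chi g \<xi> K (Suc n) = \<Phi> (chiM chi g (Psi0 \<Phi> chi g \<xi> K n) K) (\<xi> K)"

end

theory Submission
  imports Defs
begin

text \<open>Let m(n) be the first index \<ge> \<xi>(K) at which the sequence lies in the approximation
  of F of precision chiM(\<Psi>(n), K); the liminf-bound gives m(n) \<le> \<Psi>(n+1). Total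
  boundedness yields i < j \<le> \<gamma>(\<alpha>G(K)) with x(m(i)) and p := x(m(j)) close. Since N := m(i) \<le> \<Psi>(j),
  the point p is precise enough for quasi-Fejer monotonicity to apply from N over g(N) steps, and
  N \<ge> \<xi>(K) makes the error terms \<open>\<Sum>\<epsilon> i\<close> small; hence the whole window [N, N + g(N)] stays
  near p. As this holds for every g, the sequence is Cauchy.\<close>

lemma AF_antimono: "k \<le> k' \<Longrightarrow> AF Ft k' \<subseteq> AF Ft k"
  unfolding AF_def by auto

lemma chiM_ge: "i \<le> n \<Longrightarrow> chi i (g i) r \<le> chiM chi g n r"
  unfolding chiM_def by (rule Max_ge) auto

lemma chiM_mono: "n \<le> n' \<Longrightarrow> chiM chi g n r \<le> chiM chi g n' r"
  unfolding chiM_def by (rule Max_mono) auto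

lemma Psi0_mono:
  assumes "\<forall>k k' n n'. k \<le> k' \<longrightarrow> n \<le> n' \<longrightarrow> \<Phi> k n \<le> \<Phi> k' n'"
  shows "mono (Psi0 \<Phi> chi g \<xi> K)"
proof (rule incseq_SucI)
  show "Psi0 \<Phi> chi g \<xi> K n \<le> Psi0 \<Phi> chi g \<xi> K (Suc n)" for n
  proof (induction n)
    case (Suc n)
    then have "chiM chi g (Psi0 \<Phi> chi g \<xi> K n) K \<le> chiM chi g (Psi0 \<Phi> chi g \<xi> K (Suc n)) K"
      by (rule chiM_mono)
    then show ?case using assms by simp
  qed simp
qed

lemma varphi_hat_props:
  assumes "liminf_property x Ft"
  shows "n \<le> varphi_hat x Ft k n" and "x (varphi_hat x Ft k n) \<in> AF Ft k"
proof -
  have "\<exists>N. n \<le> N \<and> x N \<in> AF Ft k"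
    using assms unfolding liminf_property_def by blast
  then have "n \<le> varphi_hat x Ft k n \<and> x (varphi_hat x Ft k n) \<in> AF Ft k"
    unfolding varphi_hat_def by (rule LeastI_ex)
  then show "n \<le> varphi_hat x Ft k n" and "x (varphi_hat x Ft k n) \<in> AF Ft k"
    by auto
qed

lemma sum_le_suminf_shift:
  fixes \<epsilon> :: "nat \<Rightarrow> real"
  assumes "\<And>n. 0 \<le> \<epsilon> n" and "summable \<epsilon>" and "a \<le> N"
  shows "(\<Sum>i\<in>{N..<N+M}. \<epsilon> i) \<le> (\<Sum>i. \<epsilon> (i + a))"
proof -
  have "(\<Sum>i\<in>{N..<N+M}. \<epsilon> i) = (\<Sum>i\<in>{N-a..<N-a+M}. \<epsilon> (i + a))"
    using sum.shift_bounds_nat_ivl[of \<epsilon> "N-a" a "N-a+M"] \<open>a \<le> N\<close> by simp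
  also have "\<dots> \<le> (\<Sum>i. \<epsilon> (i + a))"
    using assms(1,2) by (intro sum_le_suminf) (auto simp: summable_iff_shift)
  finally show ?thesis .
qed

lemma fejer_window_close:
  assumes fejer: "unif_quasi_GH_fejer x Ft G H \<epsilon> chi"
    and betaH: "H_modulus H \<beta>H"
    and p: "p \<in> AF Ft (chi N M r)"
    and G_small: "G (dist (x N) p) \<le> 1 / (real r + 1)"
    and sum_small: "(\<Sum>i\<in>{N..<N+M}. \<epsilon> i) \<le> 1 / (real r + 1)"
    and r: "3 / (real r + 1) \<le> 1 / (real (\<beta>H k) + 1)"
    and i: "N \<le> i" "i \<le> N + M"
  shows "dist (x i) p \<le> 1 / (real k + 1)"
proof -
  have "i - N \<le> M"
    using i by simp
  then have "H (dist (x (N + (i - N))) p)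
      < G (dist (x N) p) + (\<Sum>i\<in>{N..<N+M}. \<epsilon> i) + 1 / (real r + 1)"
    using fejer p unfolding unif_quasi_GH_fejer_def by blast
  also have "\<dots> \<le> 3 / (real r + 1)"
    using G_small sum_small by simp
  finally have "H (dist (x i) p) \<le> 1 / (real (\<beta>H k) + 1)"
    using r i by simp
  then show ?thesis
    using betaH unfolding H_modulus_def by simp
qed

lemma window_dist_le_if_near_point:
  assumes "\<And>i. N \<le> i \<Longrightarrow> i \<le> N + M \<Longrightarrow> dist (x i) p \<le> 1 / (real (2 * k + 1) + 1)"
  shows "\<forall>i j. N \<le> i \<longrightarrow> i \<le> N + M \<longrightarrow> N \<le> j \<longrightarrow> j \<le> N + M \<longrightarrow>
           dist (x i) (x j) \<le> 1 / (real k + 1)"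
proof (intro allI impI)
  fix i j assume "N \<le> i" "i \<le> N + M" "N \<le> j" "j \<le> N + M"
  have "dist (x i) (x j) \<le> dist (x i) p + dist (x j) p"
    by (rule dist_triangle2)
  also have "\<dots> \<le> 1 / (real (2 * k + 1) + 1) + 1 / (real (2 * k + 1) + 1)"
    using assms \<open>N \<le> i\<close> \<open>i \<le> N + M\<close> \<open>N \<le> j\<close> \<open>j \<le> N + M\<close> by (intro add_mono)
  also have "\<dots> = 1 / (real k + 1)"
    by (simp add: field_simps)
  finally show "dist (x i) (x j) \<le> 1 / (real k + 1)" .
qed

lemma metastable_imp_Cauchy:
  fixes x :: "nat \<Rightarrow> 'a::metric_space"
  assumes meta: "\<And>k g. \<exists>N. \<forall>i j. N \<le> i \<longrightarrow> i \<le> N + g N \<longrightarrow> N \<le> j \<longrightarrow> j \<le> N + g N \<longrightarrow>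
                   dist (x i) (x j) \<le> 1 / (real k + 1)"
  shows "Cauchy x"
proof (rule ccontr)
  assume "\<not> Cauchy x"
  then obtain e where "e > 0" and far: "\<forall>M. \<exists>a\<ge>M. \<exists>b\<ge>M. e \<le> dist (x a) (x b)"
    unfolding Cauchy_def by (auto simp: not_less)
  obtain k :: nat where k: "1 / (real k + 1) < e"
    using \<open>e > 0\<close> by (metis nat_approx_posE of_nat_Suc add.commute)
  have "\<exists>t. \<exists>a b. M \<le> a \<and> a \<le> M + t \<and> M \<le> b \<and> b \<le> M + t \<and> e \<le> dist (x a) (x b)" for M
  proof -
    obtain a b where "M \<le> a" "M \<le> b" "e \<le> dist (x a) (x b)"
      using far by blast
    then show ?thesis
      by (intro exI[of _ "a + b"] exI[of _ a] exI[of _ b]) auto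
  qed
  then obtain g where
    "\<And>M. \<exists>a b. M \<le> a \<and> a \<le> M + g M \<and> M \<le> b \<and> b \<le> M + g M \<and> e \<le> dist (x a) (x b)"
    by metis
  moreover obtain N where "\<forall>i j. N \<le> i \<longrightarrow> i \<le> N + g N \<longrightarrow> N \<le> j \<longrightarrow> j \<le> N + g N \<longrightarrow>
                            dist (x i) (x j) \<le> 1 / (real k + 1)"
    using meta by blast
  ultimately obtain a b where "e \<le> dist (x a) (x b)" "dist (x a) (x b) \<le> 1 / (real k + 1)"
    by blast
  with k show False
    by linarith
qed

lemma fejer_metastability:
  fixes x :: "nat \<Rightarrow> 'a::metric_space"
  assumes gamma: "II_modulus \<gamma> TYPE('a)"
    and alphaG: "G_modulus G \<alpha>G"
    and betaH: "H_modulus H \<beta>H"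
    and eps_nonneg: "\<And>n. 0 \<le> \<epsilon> n"
    and eps_summable: "summable \<epsilon>"
    and xi: "cauchy_modulus_series \<epsilon> \<xi>"
    and fejer: "unif_quasi_GH_fejer x Ft G H \<epsilon> chi"
    and liminf: "liminf_property x Ft"
    and Phi: "liminf_bound x Ft \<Phi>"
    and K: "3 / (real K + 1) \<le> 1 / (real (\<beta>H (2 * k + 1)) + 1)"
  shows "\<exists>N \<le> Psi0 \<Phi> chi g \<xi> K (\<gamma> (\<alpha>G K) + 1).
           \<forall>i j. N \<le> i \<longrightarrow> i \<le> N + g N \<longrightarrow> N \<le> j \<longrightarrow> j \<le> N + g N \<longrightarrow>
             dist (x i) (x j) \<le> 1 / (real k + 1)"
proof -
  define \<psi> where "\<psi> = Psi0 \<Phi> chi g \<xi> K"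
  define m where "m n = varphi_hat x Ft (chiM chi g (\<psi> n) K) (\<xi> K)" for n
  have \<psi>_mono: "mono \<psi>"
    unfolding \<psi>_def using Phi by (intro Psi0_mono) (simp add: liminf_bound_def)
  have m_le: "m n \<le> \<psi> (Suc n)" for n
    using Phi unfolding liminf_bound_def m_def \<psi>_def by simp
  obtain i j where "i < j" "j \<le> \<gamma> (\<alpha>G K)"
    and close_ij: "dist (x (m i)) (x (m j)) \<le> 1 / (real (\<alpha>G K) + 1)"
    using gamma[unfolded II_modulus_def, rule_format, of "\<alpha>G K" "\<lambda>n. x (m n)"] by blast
  define N where "N = m i"
  define p where "p = x (m j)"
  have "N \<le> \<psi> j"
    using m_le[of i] monoD[OF \<psi>_mono, of "Suc i" j] \<open>i < j\<close> unfolding N_def by simp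
  moreover have "\<psi> j \<le> \<psi> (\<gamma> (\<alpha>G K) + 1)"
    using monoD[OF \<psi>_mono] \<open>j \<le> \<gamma> (\<alpha>G K)\<close> by simp
  ultimately have N_bound: "N \<le> \<psi> (\<gamma> (\<alpha>G K) + 1)"
    by linarith
  have "p \<in> AF Ft (chi N (g N) K)"
    using varphi_hat_props(2)[OF liminf] AF_antimono[OF chiM_ge[OF \<open>N \<le> \<psi> j\<close>, of chi g K], of Ft]
    unfolding p_def m_def by blast
  moreover have "G (dist (x N) p) \<le> 1 / (real K + 1)"
    using alphaG close_ij unfolding G_modulus_def N_def p_def by simp
  moreover have "(\<Sum>i\<in>{N..<N+g N}. \<epsilon> i) \<le> 1 / (real K + 1)"
    using sum_le_suminf_shift[OF eps_nonneg eps_summable varphi_hat_props(1)[OF liminf]]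
      xi unfolding cauchy_modulus_series_def N_def m_def by (meson less_imp_le order_trans)
  ultimately have near_p: "dist (x i') p \<le> 1 / (real (2 * k + 1) + 1)"
    if "N \<le> i'" "i' \<le> N + g N" for i'
    using fejer_window_close[OF fejer betaH _ _ _ K] that by blast
  then show ?thesis
    using window_dist_le_if_near_point N_bound unfolding \<psi>_def by blast
qed

theorem theorem6p4:
  fixes x :: "nat \<Rightarrow> 'a::metric_space"
    and \<gamma> :: "nat \<Rightarrow> nat"
    and F :: "'a set" and Ft :: "nat \<Rightarrow> 'a set"
    and G H :: "real \<Rightarrow> real" and \<alpha>G \<beta>H :: "nat \<Rightarrow> nat"
    and \<epsilon> :: "nat \<Rightarrow> real" and \<xi> :: "nat \<Rightarrow> nat"
    and chi :: "nat \<Rightarrow> nat \<Rightarrow> nat \<Rightarrow> nat" and \<Phi> :: "nat \<Rightarrow> nat \<Rightarrow> nat"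
  assumes gamma: "II_modulus \<gamma> TYPE('a)"
    and F_ne: "F \<noteq> {}"
    and F_rep: "F = (\<Inter>k. Ft k)"
    and G_nonneg: "\<And>a. 0 \<le> a \<Longrightarrow> 0 \<le> G a"
    and H_nonneg: "\<And>a. 0 \<le> a \<Longrightarrow> 0 \<le> H a"
    and alphaG: "G_modulus G \<alpha>G"
    and betaH: "H_modulus H \<beta>H"
    and eps_nonneg: "\<And>n. 0 \<le> \<epsilon> n"
    and eps_summable: "summable \<epsilon>"
    and xi: "cauchy_modulus_series \<epsilon> \<xi>"
    and fejer: "unif_quasi_GH_fejer x Ft G H \<epsilon> chi"
    and liminf: "liminf_property x Ft"
    and Phi: "liminf_bound x Ft \<Phi>"
  shows "Cauchy x \<and>
    (\<forall>(k::nat) (g::nat \<Rightarrow> nat).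
       \<exists>N \<le> Psi0 \<Phi> chi g \<xi> (4 * \<beta>H (2 * k + 1) + 3) (\<gamma> (\<alpha>G (4 * \<beta>H (2 * k + 1) + 3)) + 1).
         \<forall>i j. N \<le> i \<longrightarrow> i \<le> N + g N \<longrightarrow> N \<le> j \<longrightarrow> j \<le> N + g N \<longrightarrow>
           dist (x i) (x j) \<le> 1 / (real k + 1))"
proof -
  have K: "3 / (real (4 * \<beta>H (2 * k + 1) + 3) + 1) \<le> 1 / (real (\<beta>H (2 * k + 1)) + 1)" for k
    by (simp add: field_simps)
  note meta = fejer_metastability[OF gamma alphaG betaH eps_nonneg eps_summable xi fejer
                                     liminf Phi K]
  have "Cauchy x"
    by (rule metastable_imp_Cauchy) (use meta in blast)
  with meta show ?thesis
    by blast
qed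

end
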